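(* Let $A$ be a brick gentle algebra. For any label $w_{\mathcal D}\in\mathcal S$, the string module $M(\mathrm{str}(w_{\mathcal D}))\in\mathcal M$ is a brick as a $\Pi(A)$-module, i.e. $\mathrm{End}_{\Pi(A)}(M(\mathrm{str}(w_{\mathcal D})))=k$.
   Context: Setting: $k$ a field, $A=kQ/I$, $Q$ finite connected quiver, $I$ admissible generated by paths (paths composed right to left). Gentle: (S1) each vertex has at most two incoming and two outgoing arrows; (S2) for each arrow $\alpha$ at most one $\beta$ with $\alpha\beta$ a path not in $I$ and at most one $\gamma$ with $\gamma\alpha$ a path not in $I$; (G1) $I$ generated by paths of length two; (G2) for each arrow $\alpha$ at most one $\beta$ with $\alpha\beta$ a path in $I$ and at most one $\gamma$ with $\gamma\alpha$ a path in $I$. Brick gentle: moreover every indecomposable module has endomorphism ring a division ring. Strings (for any $k\Gamma/J$, $J$ generated by paths): words $w=\gamma_d^{\epsilon_d}\cdots\gamma_1^{\epsilon_1}$ in arrows and formal inverses ($s(\gamma^{-1})=t(\gamma)$, $t(\gamma^{-1})=s(\gamma)$), consecutive letters composable, no $\gamma\gamma^{-1}$ or $\gamma^{-1}\gamma$, neither $w$ nor $w^{-1}$ containing a subword which is a path in $J$; plus length-zero strings; $w\sim w^{-1}$. String module $M(w)$: basis $b_1,\dots,b_{d+1}$, $b_j$ at vertex $x_j$ where $x_1=s(\gamma_1^{\epsilon_1})$, $x_{i+1}=t(\gamma_i^{\epsilon_i})$; $\gamma_i$ sends $b_i\mapsto b_{i+1}$ if $\epsilon_i=1$, $b_{i+1}\mapsto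 b_i$ if $\epsilon_i=-1$; other arrow actions on basis vectors are zero. For $w=\gamma_d^{\epsilon_d}\cdots\gamma_1^{\epsilon_1}\in\mathrm{Str}(A)$ and $1\le j\le d$, $w=w_1\gamma_j^{\epsilon_j}w_2$ gives a break $\{w_1,w_2\}$, with $w_1,w_2$ splits. Labels: $\mathcal S$ = pairs $w_{\mathcal D}=(w,\mathcal D)$, $w\in\mathrm{Str}(A)$ of length $d$, $\mathcal D$ a set of $d$ splits of $w$ no two from the same break (so exactly one from each break), modulo $(w,\mathcal D)\sim(w^{-1},\mathcal D^{-1})$. $\Pi(A)=k\overline Q/\overline I$, where $\overline Q$ adds an arrow $\gamma^*:t(\gamma)\to s(\gamma)$ for each $\gamma\in Q_1$ and $\overline I$ is generated by $\beta\alpha,\alpha^*\beta^*$ for paths $\beta\alpha\in I$ of length two. A string of $\Pi(A)$ specializes to the word obtained by replacing $\gamma^*$ by $\gamma^{-1}$ and $(\gamma^* )^{-1}$ by $\gamma$; $\mathcal M$ is the additive closure in $\mathrm{mod}(\Pi(A))$ of the string modules of strings of $\Pi(A)$ specializing to strings of $A$. The map $\mathrm{str}$: for $w_{\mathcal D}$ with $w=\gamma_d^{\epsilon_d}\cdots\gamma_1^{\epsilon_1}$, $\mathrm{str}(w_{\mathcal D})$ is the word obtained by replacing the $i$-th letter as follows: if $w=u\gamma_iw'$ with $w'\in\mathcal D$, use $\gamma_i$; if $w=u\gamma_i^{-1}w'$ with $w'\in\mathcal D$, use $\gamma_i^*$; if $w=w'\gamma_i^{-1}u$ with $w'\in\mathcal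 D$, use $\gamma_i^{-1}$; if $w=w'\gamma_iu$ with $w'\in\mathcal D$, use $(\gamma_i^* )^{-1}$ (here $u$ is a possibly empty string). This is a string of $\Pi(A)$ specializing to $w$. *)

theory Defs
  imports Main
begin

text \<open>
A bound quiver is given by a vertex set V, an arrow set E,
source and target maps s, t, and a set R of relations (beta, alpha) standing
for the length-two path "beta alpha" (alpha first, then beta; so s beta = t alpha).
The ideal I is the ideal generated by these length-two paths (condition G1).
Paths are lists of arrows written right to left: [g_d, ..., g_1].
\<close>

definition quiver_wf :: "'v set \<Rightarrow> 'a set \<Rightarrow> ('a \<Rightarrow> 'v) \<Rightarrow> ('a \<Rightarrow> 'v) \<Rightarrow> bool" where
  "quiver_wf V E s t \<longleftrightarrow> finite V \<and> finite E \<and> (\<forall>a\<in>E. s a \<in> V \<and> t a \<in> V)"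

definition quiver_connected :: "'v set \<Rightarrow> 'a set \<Rightarrow> ('a \<Rightarrow> 'v) \<Rightarrow> ('a \<Rightarrow> 'v) \<Rightarrow> bool" where
  "quiver_connected V E s t \<longleftrightarrow> V \<noteq> {} \<and>
     (\<forall>x\<in>V. \<forall>y\<in>V. (x, y) \<in> ({(s a, t a) | a. a \<in> E} \<union> {(t a, s a) | a. a \<in> E})\<^sup>*)"

definition rels_wf :: "'a set \<Rightarrow> ('a \<Rightarrow> 'v) \<Rightarrow> ('a \<Rightarrow> 'v) \<Rightarrow> ('a \<times> 'a) set \<Rightarrow> bool" where
  "rels_wf E s t R \<longleftrightarrow> (\<forall>(b, a)\<in>R. b \<in> E \<and> a \<in> E \<and> s b = t a)"

definition is_path :: "'a set \<Rightarrow> ('a \<Rightarrow> 'v) \<Rightarrow> ('a \<Rightarrow> 'v) \<Rightarrow> 'a list \<Rightarrow> bool" where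
  "is_path E s t p \<longleftrightarrow> p \<noteq> [] \<and> set p \<subseteq> E \<and>
     (\<forall>i. Suc i < length p \<longrightarrow> s (p ! i) = t (p ! Suc i))"

text \<open>A path lies in the ideal generated by R iff it contains a relation as a subword.\<close>
definition path_in_ideal :: "('a \<times> 'a) set \<Rightarrow> 'a list \<Rightarrow> bool" where
  "path_in_ideal R p \<longleftrightarrow> (\<exists>i. Suc i < length p \<and> (p ! i, p ! Suc i) \<in> R)"

text \<open>Admissibility: J^n is contained in I for some n (I is contained in J^2 automatically).\<close>
definition admissible :: "'a set \<Rightarrow> ('a \<Rightarrow> 'v) \<Rightarrow> ('a \<Rightarrow> 'v) \<Rightarrow> ('a \<times> 'a) set \<Rightarrow> bool" where
  "admissible E s t R \<longleftrightarrow>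
     (\<exists>n. \<forall>p. is_path E s t p \<and> n \<le> length p \<longrightarrow> path_in_ideal R p)"

definition gentle :: "'v set \<Rightarrow> 'a set \<Rightarrow> ('a \<Rightarrow> 'v) \<Rightarrow> ('a \<Rightarrow> 'v) \<Rightarrow> ('a \<times> 'a) set \<Rightarrow> bool" where
  "gentle V E s t R \<longleftrightarrow>
     quiver_wf V E s t \<and> quiver_connected V E s t \<and> rels_wf E s t R \<and> admissible E s t R \<and>
     \<comment> \<open>(S1)\<close>
     (\<forall>v\<in>V. card {a\<in>E. t a = v} \<le> 2 \<and> card {a\<in>E. s a = v} \<le> 2) \<and>
     \<comment> \<open>(S2)\<close>
     (\<forall>a\<in>E. card {b\<in>E. s a = t b \<and> (a, b) \<notin> R} \<le> 1 \<and>
             card {g\<in>E. s g = t a \<and> (g, a) \<notin> R} \<le> 1) \<and>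
     \<comment> \<open>(G2); (G1) is built into the format of R\<close>
     (\<forall>a\<in>E. card {b\<in>E. s a = t b \<and> (a, b) \<in> R} \<le> 1 \<and>
             card {g\<in>E. s g = t a \<and> (g, a) \<in> R} \<le> 1)"

text \<open>A finite-dimensional module over kQ/I is presented as k^N with a basis
e_0, ..., e_{N-1}, each basis vector e_i lying at the vertex vert i (so the
space is the direct sum of the e_v-parts), and each arrow a acting by the
matrix act a (entry (j, i) = coefficient of e_j in a e_i).\<close>

definition mmul :: "nat \<Rightarrow> (nat \<Rightarrow> nat \<Rightarrow> 'k::semiring_0) \<Rightarrow> (nat \<Rightarrow> nat \<Rightarrow> 'k) \<Rightarrow> nat \<Rightarrow> nat \<Rightarrow> 'k" where
  "mmul N A B = (\<lambda>j i. \<Sum>k<N. A j k * B k i)"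

definition idm :: "nat \<Rightarrow> nat \<Rightarrow> nat \<Rightarrow> 'k::{zero,one}" where
  "idm N = (\<lambda>j i. if j = i \<and> i < N then 1 else 0)"

definition is_rep :: "'v set \<Rightarrow> 'a set \<Rightarrow> ('a \<Rightarrow> 'v) \<Rightarrow> ('a \<Rightarrow> 'v) \<Rightarrow> ('a \<times> 'a) set \<Rightarrow>
    nat \<Rightarrow> (nat \<Rightarrow> 'v) \<Rightarrow> ('a \<Rightarrow> nat \<Rightarrow> nat \<Rightarrow> 'k::field) \<Rightarrow> bool" where
  "is_rep V E s t R N vert act \<longleftrightarrow>
     (\<forall>i<N. vert i \<in> V) \<and>
     (\<forall>a j i. act a j i \<noteq> 0 \<longrightarrow> a \<in> E \<and> i < N \<and> j < N \<and> vert i = s a \<and> vert j = t a) \<and>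
     (\<forall>b a. (b, a) \<in> R \<longrightarrow> mmul N (act b) (act a) = (\<lambda>j i. 0))"

text \<open>Module endomorphisms: commute with the vertex idempotents and all arrows.\<close>
definition is_endo :: "nat \<Rightarrow> (nat \<Rightarrow> 'v) \<Rightarrow> ('a \<Rightarrow> nat \<Rightarrow> nat \<Rightarrow> 'k::field) \<Rightarrow>
    (nat \<Rightarrow> nat \<Rightarrow> 'k) \<Rightarrow> bool" where
  "is_endo N vert act f \<longleftrightarrow>
     (\<forall>j i. f j i \<noteq> 0 \<longrightarrow> i < N \<and> j < N \<and> vert i = vert j) \<and>
     (\<forall>a. mmul N (act a) f = mmul N f (act a))"

text \<open>Indecomposable: nonzero and no nontrivial direct-sum decomposition,
i.e. no idempotent endomorphism other than 0 and 1.\<close>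
definition indecomposable :: "nat \<Rightarrow> (nat \<Rightarrow> 'v) \<Rightarrow> ('a \<Rightarrow> nat \<Rightarrow> nat \<Rightarrow> 'k::field) \<Rightarrow> bool" where
  "indecomposable N vert act \<longleftrightarrow> 0 < N \<and>
     (\<forall>e. is_endo N vert act e \<and> mmul N e e = e \<longrightarrow> e = (\<lambda>j i. 0) \<or> e = idm N)"

definition end_division :: "nat \<Rightarrow> (nat \<Rightarrow> 'v) \<Rightarrow> ('a \<Rightarrow> nat \<Rightarrow> nat \<Rightarrow> 'k::field) \<Rightarrow> bool" where
  "end_division N vert act \<longleftrightarrow>
     (\<forall>f. is_endo N vert act f \<and> f \<noteq> (\<lambda>j i. 0) \<longrightarrow>
        (\<exists>g. is_endo N vert act g \<and> mmul N f g = idm N \<and> mmul N g f = idm N))"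

definition end_is_field :: "nat \<Rightarrow> (nat \<Rightarrow> 'v) \<Rightarrow> ('a \<Rightarrow> nat \<Rightarrow> nat \<Rightarrow> 'k::field) \<Rightarrow> bool" where
  "end_is_field N vert act \<longleftrightarrow>
     (\<forall>f. is_endo N vert act f \<longrightarrow> (\<exists>c. f = (\<lambda>j i. c * idm N j i)))"

definition brick_gentle :: "'k::field itself \<Rightarrow> 'v set \<Rightarrow> 'a set \<Rightarrow> ('a \<Rightarrow> 'v) \<Rightarrow> ('a \<Rightarrow> 'v) \<Rightarrow>
    ('a \<times> 'a) set \<Rightarrow> bool" where
  "brick_gentle _ V E s t R \<longleftrightarrow> gentle V E s t R \<and>
     (\<forall>N (vert :: nat \<Rightarrow> 'v) (act :: 'a \<Rightarrow> nat \<Rightarrow> nat \<Rightarrow> 'k).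
        is_rep V E s t R N vert act \<and> indecomposable N vert act \<longrightarrow> end_division N vert act)"

datatype 'a letter = Dir 'a | Inv 'a

fun larr :: "'a letter \<Rightarrow> 'a" where
  "larr (Dir a) = a" | "larr (Inv a) = a"

fun linv :: "'a letter \<Rightarrow> 'a letter" where
  "linv (Dir a) = Inv a" | "linv (Inv a) = Dir a"

fun lsrc :: "('a \<Rightarrow> 'v) \<Rightarrow> ('a \<Rightarrow> 'v) \<Rightarrow> 'a letter \<Rightarrow> 'v" where
  "lsrc s t (Dir a) = s a" | "lsrc s t (Inv a) = t a"

fun ltgt :: "('a \<Rightarrow> 'v) \<Rightarrow> ('a \<Rightarrow> 'v) \<Rightarrow> 'a letter \<Rightarrow> 'v" where
  "ltgt s t (Dir a) = t a" | "ltgt s t (Inv a) = s a"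

text \<open>A string w = g_d^{e_d} ... g_1^{e_1} is represented by its starting
vertex x = x_1 together with the list L = [g_1^{e_1}, ..., g_d^{e_d}]
(L ! m is the (m+1)-th letter, applied first-to-last).  Length-zero strings
are (x, []).  No subword of w or w^{-1} may be a path in I; since I is generated
by the length-two paths in R, this means no two consecutive direct letters
form a relation in w and no two consecutive inverse letters form a relation in w^{-1}.\<close>
definition is_string :: "'v set \<Rightarrow> 'a set \<Rightarrow> ('a \<Rightarrow> 'v) \<Rightarrow> ('a \<Rightarrow> 'v) \<Rightarrow> ('a \<times> 'a) set \<Rightarrow>
    'v \<Rightarrow> 'a letter list \<Rightarrow> bool" where
  "is_string V E s t R x L \<longleftrightarrow>
     x \<in> V \<and> (\<forall>l\<in>set L. larr l \<in> E) \<and>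
     (L \<noteq> [] \<longrightarrow> lsrc s t (L ! 0) = x) \<and>
     (\<forall>i. Suc i < length L \<longrightarrow>
        ltgt s t (L ! i) = lsrc s t (L ! Suc i) \<and>
        L ! Suc i \<noteq> linv (L ! i) \<and>
        (\<forall>a b. L ! i = Dir a \<and> L ! Suc i = Dir b \<longrightarrow> (b, a) \<notin> R) \<and>
        (\<forall>a b. L ! i = Inv a \<and> L ! Suc i = Inv b \<longrightarrow> (a, b) \<notin> R))"

text \<open>String module M(w): basis b_1..b_{d+1} is indexed 0..d.\<close>
definition smod_vert :: "('a \<Rightarrow> 'v) \<Rightarrow> ('a \<Rightarrow> 'v) \<Rightarrow> 'v \<Rightarrow> 'a letter list \<Rightarrow> nat \<Rightarrow> 'v" where
  "smod_vert s t x L j = (if j = 0 then x else ltgt s t (L ! (j - 1)))"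

definition smod_act :: "'a letter list \<Rightarrow> 'a \<Rightarrow> nat \<Rightarrow> nat \<Rightarrow> 'k::field" where
  "smod_act L a j i =
     (if \<exists>m<length L. (L ! m = Dir a \<and> j = Suc m \<and> i = m) \<or> (L ! m = Inv a \<and> j = m \<and> i = Suc m)
      then 1 else 0)"

datatype 'a parr = Orig 'a | Star 'a

definition PiE :: "'a set \<Rightarrow> 'a parr set" where
  "PiE E = Orig ` E \<union> Star ` E"

fun pis :: "('a \<Rightarrow> 'v) \<Rightarrow> ('a \<Rightarrow> 'v) \<Rightarrow> 'a parr \<Rightarrow> 'v" where
  "pis s t (Orig a) = s a" | "pis s t (Star a) = t a"

fun pit :: "('a \<Rightarrow> 'v) \<Rightarrow> ('a \<Rightarrow> 'v) \<Rightarrow> 'a parr \<Rightarrow> 'v" where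
  "pit s t (Orig a) = t a" | "pit s t (Star a) = s a"

definition PiR :: "('a \<times> 'a) set \<Rightarrow> ('a parr \<times> 'a parr) set" where
  "PiR R = {(Orig b, Orig a) | b a. (b, a) \<in> R} \<union> {(Star a, Star b) | b a. (b, a) \<in> R}"

text \<open>A label (w, D) is given by the string (x, L) of A and a choice c: for the
break at the (m+1)-th letter, c m = True means the split in D is the right-hand
part w' (w = u g w'), c m = False means it is the left-hand part (w = w' g u).\<close>
fun str_letter :: "bool \<Rightarrow> 'a letter \<Rightarrow> 'a parr letter" where
  "str_letter True (Dir g) = Dir (Orig g)"
| "str_letter True (Inv g) = Dir (Star g)"
| "str_letter False (Inv g) = Inv (Orig g)"
| "str_letter False (Dir g) = Inv (Star g)"

definition str :: "'a letter list \<Rightarrow> (nat \<Rightarrow> bool) \<Rightarrow> 'a parr letter list" where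
  "str L c = map (\<lambda>m. str_letter (c m) (L ! m)) [0..<length L]"

end

theory Submission
  imports Defs
begin

text \<open>
  In a brick gentle algebra no string passes through a vertex twice.  Otherwise a shortest
  closed subwalk is a simple cycle, and a simple cycle yields an indecomposable module whose
  endomorphism ring is k[\<phi>]/(\<phi>^2), hence not a division ring: if both ends of the cycle are
  direct letters (or, after reversing it, both inverse letters) this is its string module, with
  \<phi> sending the first basis vector to the last one; otherwise the cycle is a band and this is
  its band module for a 2 \<times> 2 Jordan block, with \<phi> identifying the two layers.

  The string str(w_D) of \<Pi>(A) passes through the same vertices as w, whatever D is.  So every
  endomorphism of M(str(w_D)) is diagonal, and commuting with the arrows forces neighbouring
  diagonal entries to agree: it is a scalar.
\<close>

section \<open>Matrix algebra\<close>

lemma mmul_eq_single: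
  assumes "k < N" and "\<And>l. l < N \<Longrightarrow> l \<noteq> k \<Longrightarrow> A j l * B l i = 0"
  shows "mmul N A B j i = A j k * B k i"
proof -
  have "mmul N A B j i = (\<Sum>l\<in>{k}. A j l * B l i)"
    unfolding mmul_def using assms by (intro sum.mono_neutral_right) auto
  then show ?thesis by simp
qed

lemma mmul_eq_two:
  assumes "k1 < N" "k2 < N" "k1 \<noteq> k2"
    and "\<And>l. l < N \<Longrightarrow> l \<noteq> k1 \<Longrightarrow> l \<noteq> k2 \<Longrightarrow> A j l * B l i = 0"
  shows "mmul N A B j i = A j k1 * B k1 i + A j k2 * B k2 i"
proof -
  have "mmul N A B j i = (\<Sum>l\<in>{k1, k2}. A j l * B l i)"
    unfolding mmul_def using assms by (intro sum.mono_neutral_right) auto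
  with assms(3) show ?thesis by simp
qed

lemma mmul_assoc: "mmul N (mmul N A B) C = mmul N A (mmul N B C)"
  unfolding mmul_def sum_distrib_left sum_distrib_right mult.assoc by (rule ext, rule ext, rule sum.swap)

lemma mmul_lincomb_left:
  "mmul N (\<lambda>j i. a * A j i + b * B j i) C = (\<lambda>j i. a * mmul N A C j i + b * mmul N B C j i)"
  by (simp add: mmul_def fun_eq_iff sum.distrib sum_distrib_left algebra_simps)

lemma mmul_lincomb_right:
  fixes C :: "nat \<Rightarrow> nat \<Rightarrow> 'k::comm_semiring_0"
  shows "mmul N C (\<lambda>j i. a * A j i + b * B j i) = (\<lambda>j i. a * mmul N C A j i + b * mmul N C B j i)"
  by (simp add: mmul_def fun_eq_iff sum.distrib sum_distrib_left mult.left_commute distrib_left)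

lemma mmul_zero_left [simp]: "mmul N (\<lambda>j i. 0) A = (\<lambda>j i. 0)"
  by (simp add: mmul_def)

lemma mmul_idm_left:
  fixes A :: "nat \<Rightarrow> nat \<Rightarrow> 'k::semiring_1"
  assumes "\<And>j i. A j i \<noteq> 0 \<Longrightarrow> j < N"
  shows "mmul N (idm N) A = A"
proof (intro ext)
  fix j i
  show "mmul N (idm N) A j i = A j i"
  proof (cases "j < N")
    case True
    then show ?thesis by (subst mmul_eq_single[of j]) (auto simp: idm_def)
  next
    case False
    then show ?thesis using assms by (auto simp: mmul_def idm_def)
  qed
qed

lemma mmul_idm_right:
  fixes A :: "nat \<Rightarrow> nat \<Rightarrow> 'k::semiring_1"
  assumes "\<And>j i. A j i \<noteq> 0 \<Longrightarrow> i < N"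
  shows "mmul N A (idm N) = A"
proof (intro ext)
  fix j i
  show "mmul N A (idm N) j i = A j i"
  proof (cases "i < N")
    case True
    then show ?thesis by (subst mmul_eq_single[of i]) (auto simp: idm_def)
  next
    case False
    then show ?thesis using assms by (auto simp: mmul_def idm_def)
  qed
qed

lemma coeff_eq_0_if_scaled_eq_0:
  fixes \<phi> :: "nat \<Rightarrow> nat \<Rightarrow> 'k::field"
  assumes "(\<lambda>j i. c * \<phi> j i) = (\<lambda>j i. 0)" and "\<phi> \<noteq> (\<lambda>j i. 0)"
  shows "c = 0"
proof -
  from assms(2) obtain j i where "\<phi> j i \<noteq> 0" by (auto simp: fun_eq_iff)
  then show ?thesis using fun_cong[OF fun_cong[OF assms(1), of j], of i] by simp
qed

lemma indecomposable_not_division_if_End_dual_numbers: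
  fixes \<phi> :: "nat \<Rightarrow> nat \<Rightarrow> 'k::field"
  assumes "0 < N" and \<phi>_endo: "is_endo N vert act \<phi>" and \<phi>_nonzero: "\<phi> \<noteq> (\<lambda>j i. 0)"
    and \<phi>_square: "mmul N \<phi> \<phi> = (\<lambda>j i. 0)"
    and End: "\<And>e. is_endo N vert act e \<Longrightarrow> \<exists>a b. e = (\<lambda>j i. a * idm N j i + b * \<phi> j i)"
  shows "indecomposable N vert act \<and> \<not> end_division N vert act"
proof
  have \<phi>_supp: "\<And>j i. \<phi> j i \<noteq> 0 \<Longrightarrow> j < N \<and> i < N"
    using \<phi>_endo by (auto simp: is_endo_def)
  have \<phi>_idm: "mmul N \<phi> (idm N) = \<phi>" "mmul N (idm N) \<phi> = \<phi>"
    using \<phi>_supp by (auto intro!: mmul_idm_left mmul_idm_right)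
  have idm_idm: "mmul N (idm N) (idm N) = (idm N :: nat \<Rightarrow> nat \<Rightarrow> 'k)"
    by (rule mmul_idm_left) (auto simp: idm_def split: if_splits)
  show "indecomposable N vert act"
    unfolding indecomposable_def
  proof (intro conjI allI impI)
    fix e :: "nat \<Rightarrow> nat \<Rightarrow> 'k"
    assume "is_endo N vert act e \<and> mmul N e e = e"
    then obtain a b where e: "e = (\<lambda>j i. a * idm N j i + b * \<phi> j i)" and idem: "mmul N e e = e"
      using End by blast
    have "mmul N e e = (\<lambda>j i. a * (a * idm N j i + b * \<phi> j i) + b * (a * \<phi> j i + b * 0))"
      unfolding e mmul_lincomb_left mmul_lincomb_right \<phi>_idm idm_idm \<phi>_square ..
    with idem have "(\<lambda>j i. (a * a - a) * idm N j i + (2 * a * b - b) * \<phi> j i) = (\<lambda>j i. 0)"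
      unfolding e fun_eq_iff by (simp add: algebra_simps)
    \<comment> \<open>multiplying by \<phi> on the right kills the \<phi>-part, since \<phi> squares to zero\<close>
    then have "mmul N (\<lambda>j i. (a * a - a) * idm N j i + (2 * a * b - b) * \<phi> j i) \<phi> = (\<lambda>j i. 0)"
      by simp
    then have "(\<lambda>j i. (a * a - a) * \<phi> j i) = (\<lambda>j i. 0)"
      unfolding mmul_lincomb_left \<phi>_idm \<phi>_square by simp
    then have "a * a - a = 0" by (rule coeff_eq_0_if_scaled_eq_0[OF _ \<phi>_nonzero])
    then have aa: "a * a = a" by simp
    with \<open>(\<lambda>j i. (a * a - a) * idm N j i + _) = _\<close>
    have "(\<lambda>j i. (2 * a * b - b) * \<phi> j i) = (\<lambda>j i. 0)" by simp
    then have "2 * a * b - b = 0" by (rule coeff_eq_0_if_scaled_eq_0[OF _ \<phi>_nonzero])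
    then have ab: "2 * a * b = b" by simp
    from aa have "a = 0 \<or> a = 1" by (metis mult_cancel_right2 mult_zero_left)
    then show "e = (\<lambda>j i. 0) \<or> e = idm N"
    proof
      assume "a = 0"
      with ab have "b = 0" by simp
      with \<open>a = 0\<close> show ?thesis unfolding e by simp
    next
      assume "a = 1"
      with ab have "b + b = b + 0" by (simp add: mult_2[symmetric])
      then have "b = 0" by (rule add_left_imp_eq)
      with \<open>a = 1\<close> show ?thesis unfolding e by simp
    qed
  qed (rule \<open>0 < N\<close>)
  show "\<not> end_division N vert act"
  proof
    assume "end_division N vert act"
    then obtain g where "mmul N \<phi> g = idm N"
      using \<phi>_endo \<phi>_nonzero unfolding end_division_def by blast
    then have "\<phi> = mmul N (mmul N \<phi> \<phi>) g"
      by (simp add: mmul_assoc \<phi>_idm)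
    with \<phi>_square \<phi>_nonzero show False by simp
  qed
qed


section \<open>String modules\<close>

lemma linv_linv [simp]: "linv (linv l) = l"
  and larr_linv [simp]: "larr (linv l) = larr l"
  and lsrc_linv [simp]: "lsrc s t (linv l) = ltgt s t l"
  and ltgt_linv [simp]: "ltgt s t (linv l) = lsrc s t l"
  by (cases l; simp)+

fun is_dir :: "'a letter \<Rightarrow> bool" where
  "is_dir (Dir _) = True"
| "is_dir (Inv _) = False"

lemma is_dir_linv [simp]: "is_dir (linv l) \<longleftrightarrow> \<not> is_dir l"
  by (cases l) simp_all

lemma Dir_larr: "is_dir l \<Longrightarrow> Dir (larr l) = l"
  and Inv_larr: "\<not> is_dir l \<Longrightarrow> Inv (larr l) = l"
  by (cases l; simp)+

text \<open>In M(w), the m-th letter of w joins the basis vectors with indices m and Suc m; these are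
  the indices of the basis vectors at its source and at its target.\<close>

definition src_idx :: "'a letter list \<Rightarrow> nat \<Rightarrow> nat" where
  "src_idx L m = (if is_dir (L ! m) then m else Suc m)"

definition tgt_idx :: "'a letter list \<Rightarrow> nat \<Rightarrow> nat" where
  "tgt_idx L m = (if is_dir (L ! m) then Suc m else m)"

lemma smod_act_eq:
  "smod_act L a j i =
     (if \<exists>m<length L. larr (L ! m) = a \<and> i = src_idx L m \<and> j = tgt_idx L m then 1 else 0)"
proof -
  have "\<And>m. (L ! m = Dir a \<and> j = Suc m \<and> i = m) \<or> (L ! m = Inv a \<and> j = m \<and> i = Suc m) \<longleftrightarrow>
      larr (L ! m) = a \<and> i = src_idx L m \<and> j = tgt_idx L m"
    by (case_tac "L ! m") (auto simp: src_idx_def tgt_idx_def)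
  then show ?thesis
    unfolding smod_act_def by simp
qed

lemma smod_act_nonzero_iff:
  "(smod_act L a j i :: 'k::field) \<noteq> 0 \<longleftrightarrow>
     (\<exists>m<length L. larr (L ! m) = a \<and> i = src_idx L m \<and> j = tgt_idx L m)"
  by (simp add: smod_act_eq)

definition no_backtrack :: "'a letter list \<Rightarrow> bool" where
  "no_backtrack L \<longleftrightarrow> (\<forall>i. Suc i < length L \<longrightarrow> L ! Suc i \<noteq> linv (L ! i))"

lemma string_no_backtrack: "is_string V E s t R x L \<Longrightarrow> no_backtrack L"
  unfolding is_string_def no_backtrack_def by blast

lemma no_backtrack_idx_inj:
  assumes "no_backtrack L" and "m < length L" "m' < length L" and "larr (L ! m) = larr (L ! m')"
    and "src_idx L m = src_idx L m' \<or> tgt_idx L m = tgt_idx L m'"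
  shows "m = m'"
proof (rule ccontr)
  assume "m \<noteq> m'"
  with assms(5) have "m' = Suc m \<or> m = Suc m'" and "is_dir (L ! m) \<noteq> is_dir (L ! m')"
    by (auto simp: src_idx_def tgt_idx_def split: if_splits)
  with assms(2-4) have "L ! m' = linv (L ! m) \<and> m' = Suc m \<or> L ! m = linv (L ! m') \<and> m = Suc m'"
    by (metis Dir_larr Inv_larr is_dir_linv larr_linv)
  with assms(1-3) show False
    unfolding no_backtrack_def by blast
qed

lemma smod_act_tgt_row:
  assumes "no_backtrack L" and "m < length L"
  shows "smod_act L (larr (L ! m)) (tgt_idx L m) i = (if i = src_idx L m then 1 else 0)"
proof -
  have "m' = m" if "m' < length L" "larr (L ! m') = larr (L ! m)" "tgt_idx L m' = tgt_idx L m" for m'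
    using no_backtrack_idx_inj[OF assms that(1)] that(2,3) by simp
  then have "(\<exists>m'<length L. larr (L ! m') = larr (L ! m) \<and> i = src_idx L m' \<and> tgt_idx L m = tgt_idx L m') \<longleftrightarrow>
      i = src_idx L m"
    using assms(2) by metis
  then show ?thesis
    by (simp add: smod_act_eq)
qed

lemma smod_act_src_col:
  assumes "no_backtrack L" and "m < length L"
  shows "smod_act L (larr (L ! m)) j (src_idx L m) = (if j = tgt_idx L m then 1 else 0)"
proof -
  have "m' = m" if "m' < length L" "larr (L ! m') = larr (L ! m)" "src_idx L m' = src_idx L m" for m'
    using no_backtrack_idx_inj[OF assms that(1)] that(2,3) by simp
  then have "(\<exists>m'<length L. larr (L ! m') = larr (L ! m) \<and> src_idx L m = src_idx L m' \<and> j = tgt_idx L m') \<longleftrightarrow>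
      j = tgt_idx L m"
    using assms(2) by metis
  then show ?thesis
    by (simp add: smod_act_eq)
qed

lemma idx_le_length:
  "m < length L \<Longrightarrow> src_idx L m \<le> length L"
  "m < length L \<Longrightarrow> tgt_idx L m \<le> length L"
  by (simp_all add: src_idx_def tgt_idx_def)

lemma string_endo_diag_eq:
  assumes "no_backtrack L" and endo: "is_endo (Suc (length L)) vert (smod_act L) f"
    and m: "m < length L"
  shows "f (src_idx L m) (src_idx L m) = f (tgt_idx L m) (tgt_idx L m)"
proof -
  let ?N = "Suc (length L)" and ?a = "larr (L ! m)"
  have "mmul ?N (smod_act L ?a) f (tgt_idx L m) (src_idx L m) = f (src_idx L m) (src_idx L m)"
    using idx_le_length[OF m]
    by (subst mmul_eq_single[of "src_idx L m"]) (auto simp: smod_act_tgt_row[OF assms(1) m])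
  moreover
  have "mmul ?N f (smod_act L ?a) (tgt_idx L m) (src_idx L m) = f (tgt_idx L m) (tgt_idx L m)"
    using idx_le_length[OF m]
    by (subst mmul_eq_single[of "tgt_idx L m"]) (auto simp: smod_act_src_col[OF assms(1) m])
  ultimately show ?thesis
    using endo unfolding is_endo_def by metis
qed

lemma string_endo_diag_const:
  assumes "no_backtrack L" and "is_endo (Suc (length L)) vert (smod_act L) f"
  shows "k \<le> length L \<Longrightarrow> f k k = f 0 0"
proof (induction k)
  case (Suc k)
  then have "k < length L" by simp
  then have "{src_idx L k, tgt_idx L k} = {k, Suc k}"
    by (auto simp: src_idx_def tgt_idx_def)
  then have "f (Suc k) (Suc k) = f k k"
    using string_endo_diag_eq[OF assms \<open>k < length L\<close>] by (metis doubleton_eq_iff)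
  with Suc show ?case by simp
qed simp

lemma string_module_end_is_field:
  assumes "no_backtrack L"
    and vert_inj: "\<And>i j. i \<le> length L \<Longrightarrow> j \<le> length L \<Longrightarrow> vert i = vert j \<Longrightarrow> i = j"
  shows "end_is_field (Suc (length L)) vert (smod_act L :: 'a \<Rightarrow> nat \<Rightarrow> nat \<Rightarrow> 'k::field)"
  unfolding end_is_field_def
proof (intro allI impI)
  fix f :: "nat \<Rightarrow> nat \<Rightarrow> 'k"
  assume endo: "is_endo (Suc (length L)) vert (smod_act L) f"
  note diag = string_endo_diag_const[OF assms(1) endo]
  have "f j i = f 0 0 * idm (Suc (length L)) j i" for j i
  proof (cases "j = i \<and> i \<le> length L")
    case True
    then show ?thesis using diag[of i] by (simp add: idm_def)
  next
    case False
    have "f j i = 0"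
    proof (rule ccontr)
      assume "f j i \<noteq> 0"
      then have "i \<le> length L" "j \<le> length L" "vert i = vert j"
        using endo unfolding is_endo_def by (auto simp: less_Suc_eq_le)
      with False vert_inj show False by blast
    qed
    with False show ?thesis by (auto simp: idm_def)
  qed
  then show "\<exists>c. f = (\<lambda>j i. c * idm (Suc (length L)) j i)" by blast
qed

lemma string_step:
  assumes "is_string V E s t R x L" and "Suc j < length L"
  shows "ltgt s t (L ! j) = lsrc s t (L ! Suc j) \<and> L ! Suc j \<noteq> linv (L ! j) \<and>
    (\<forall>a b. L ! j = Dir a \<and> L ! Suc j = Dir b \<longrightarrow> (b, a) \<notin> R) \<and>
    (\<forall>a b. L ! j = Inv a \<and> L ! Suc j = Inv b \<longrightarrow> (a, b) \<notin> R)"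
  using assms unfolding is_string_def by blast

lemma string_vert_lsrc:
  assumes "is_string V E s t R x L" and "m < length L"
  shows "smod_vert s t x L m = lsrc s t (L ! m)"
  using assms unfolding is_string_def smod_vert_def
  by (cases m) (auto simp del: lsrc.simps ltgt.simps)

lemma smod_vert_Suc: "smod_vert s t x L (Suc m) = ltgt s t (L ! m)"
  by (simp add: smod_vert_def)

lemma string_vert_idx:
  assumes "is_string V E s t R x L" and "m < length L"
  shows "smod_vert s t x L (src_idx L m) = s (larr (L ! m))"
    and "smod_vert s t x L (tgt_idx L m) = t (larr (L ! m))"
  using string_vert_lsrc[OF assms] smod_vert_Suc[of s t x L m]
  by (cases "L ! m"; simp add: src_idx_def tgt_idx_def)+

lemma string_vert_in_V:
  assumes "quiver_wf V E s t" and "is_string V E s t R x L" and "i \<le> length L"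
  shows "smod_vert s t x L i \<in> V"
proof (cases i)
  case 0
  then show ?thesis using assms(2) by (simp add: smod_vert_def is_string_def)
next
  case (Suc m)
  with assms(2,3) have "larr (L ! m) \<in> E" unfolding is_string_def by simp
  with assms(1) Suc show ?thesis
    unfolding quiver_wf_def smod_vert_def by (cases "L ! m") auto
qed

lemma string_idx_relation_free:
  assumes st: "is_string V E s t R x L" and "m < length L" "m' < length L"
    and "tgt_idx L m = src_idx L m'"
  shows "(larr (L ! m'), larr (L ! m)) \<notin> R"
proof -
  have rel: "\<And>i a b. Suc i < length L \<Longrightarrow> L ! i = Dir a \<Longrightarrow> L ! Suc i = Dir b \<Longrightarrow> (b, a) \<notin> R"
    "\<And>i a b. Suc i < length L \<Longrightarrow> L ! i = Inv a \<Longrightarrow> L ! Suc i = Inv b \<Longrightarrow> (a, b) \<notin> R"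
    using string_step[OF st] by blast+
  from assms(4) have "is_dir (L ! m) \<and> is_dir (L ! m') \<and> m' = Suc m \<or>
      \<not> is_dir (L ! m) \<and> \<not> is_dir (L ! m') \<and> m = Suc m'"
    by (simp add: src_idx_def tgt_idx_def split: if_splits)
  then consider "is_dir (L ! m)" "is_dir (L ! m')" "m' = Suc m"
    | "\<not> is_dir (L ! m)" "\<not> is_dir (L ! m')" "m = Suc m'"
    by blast
  then show ?thesis
  proof cases
    case 1
    then show ?thesis using rel(1)[of m "larr (L ! m)" "larr (L ! m')"] assms(3) by (simp add: Dir_larr)
  next
    case 2
    then show ?thesis using rel(2)[of m' "larr (L ! m')" "larr (L ! m)"] assms(2) by (simp add: Inv_larr)
  qed
qed

lemma string_module_is_rep:
  assumes qw: "quiver_wf V E s t" and st: "is_string V E s t R x L"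
  shows "is_rep V E s t R (Suc (length L)) (smod_vert s t x L) (smod_act L :: 'a \<Rightarrow> nat \<Rightarrow> nat \<Rightarrow> 'k::field)"
  unfolding is_rep_def
proof (intro conjI allI impI)
  show "smod_vert s t x L i \<in> V" if "i < Suc (length L)" for i
    using string_vert_in_V[OF qw st] that by simp
next
  fix a j i
  assume "(smod_act L a j i :: 'k) \<noteq> 0"
  then obtain m where m: "m < length L" "a = larr (L ! m)" "i = src_idx L m" "j = tgt_idx L m"
    by (auto simp: smod_act_nonzero_iff)
  then show "a \<in> E" using st unfolding is_string_def by simp
  show "i < Suc (length L)" "j < Suc (length L)"
    using idx_le_length[OF m(1)] m by auto
  show "smod_vert s t x L i = s a" "smod_vert s t x L j = t a"
    using string_vert_idx[OF st m(1)] m by simp_all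
next
  fix b a
  assume "(b, a) \<in> R"
  have "(smod_act L b j l :: 'k) * smod_act L a l i = 0" for j l i
    using string_idx_relation_free[OF st] \<open>(b, a) \<in> R\<close> by (auto simp: smod_act_eq)
  then show "mmul (Suc (length L)) (smod_act L b) (smod_act L a) = (\<lambda>j i. 0 :: 'k)"
    unfolding mmul_def by (intro ext sum.neutral) simp
qed

section \<open>The strings str(w_D) of \<Pi>(A)\<close>

lemma length_str [simp]: "length (str L c) = length L"
  by (simp add: str_def)

lemma nth_str [simp]: "m < length L \<Longrightarrow> str L c ! m = str_letter (c m) (L ! m)"
  by (simp add: str_def)

lemma str_letter_lsrc [simp]: "lsrc (pis s t) (pit s t) (str_letter b l) = lsrc s t l"
  and str_letter_ltgt [simp]: "ltgt (pis s t) (pit s t) (str_letter b l) = ltgt s t l"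
  and str_letter_in_PiE [simp]: "larr (str_letter b l) \<in> PiE E \<longleftrightarrow> larr l \<in> E"
  by (cases b; cases l; auto simp: PiE_def)+

lemma str_letter_linv: "str_letter b' l' = linv (str_letter b l) \<Longrightarrow> l' = linv l"
  by (cases b; cases l; cases b'; cases l') auto

lemma str_letter_eqD:
  "str_letter b l = Dir (Orig g) \<Longrightarrow> l = Dir g"
  "str_letter b l = Dir (Star g) \<Longrightarrow> l = Inv g"
  "str_letter b l = Inv (Orig g) \<Longrightarrow> l = Inv g"
  "str_letter b l = Inv (Star g) \<Longrightarrow> l = Dir g"
  by (cases b; cases l; auto)+

lemma smod_vert_str:
  "j \<le> length L \<Longrightarrow> smod_vert (pis s t) (pit s t) x (str L c) j = smod_vert s t x L j"
  by (auto simp: smod_vert_def)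

lemma quiver_wf_PiE: "quiver_wf V E s t \<Longrightarrow> quiver_wf V (PiE E) (pis s t) (pit s t)"
  unfolding quiver_wf_def PiE_def by auto

lemma str_is_string:
  assumes "is_string V E s t R x L"
  shows "is_string V (PiE E) (pis s t) (pit s t) (PiR R) x (str L c)"
  unfolding is_string_def
proof (intro conjI allI impI ballI)
  have st: "x \<in> V" "\<forall>l\<in>set L. larr l \<in> E" "L \<noteq> [] \<Longrightarrow> lsrc s t (L ! 0) = x"
    using assms unfolding is_string_def by blast+
  show "x \<in> V" by (fact st(1))
  show "larr l \<in> PiE E" if "l \<in> set (str L c)" for l
    using that st(2) by (auto simp: str_def)
  show "lsrc (pis s t) (pit s t) (str L c ! 0) = x" if "str L c \<noteq> []"
  proof -
    from that have "0 < length L" by (simp add: str_def)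
    with st(3) show ?thesis by simp
  qed
  fix i
  assume "Suc i < length (str L c)"
  then have i: "Suc i < length L" by simp
  show "ltgt (pis s t) (pit s t) (str L c ! i) = lsrc (pis s t) (pit s t) (str L c ! Suc i)"
    using string_step[OF assms i] i by simp
  show "str L c ! Suc i \<noteq> linv (str L c ! i)"
    using string_step[OF assms i] i str_letter_linv[of "c (Suc i)" "L ! Suc i" "c i" "L ! i"] by auto
  show "(b, a) \<notin> PiR R" if "str L c ! i = Dir a \<and> str L c ! Suc i = Dir b" for a b
  proof
    assume "(b, a) \<in> PiR R"
    then consider b' a' where "b = Orig b'" "a = Orig a'" "(b', a') \<in> R"
      | b' a' where "a = Star b'" "b = Star a'" "(b', a') \<in> R"
      unfolding PiR_def by blast
    then show False
      by cases (use that i string_step[OF assms i] in \<open>auto dest!: str_letter_eqD\<close>)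
  qed
  show "(a, b) \<notin> PiR R" if "str L c ! i = Inv a \<and> str L c ! Suc i = Inv b" for a b
  proof
    assume "(a, b) \<in> PiR R"
    then consider b' a' where "a = Orig b'" "b = Orig a'" "(b', a') \<in> R"
      | b' a' where "b = Star b'" "a = Star a'" "(b', a') \<in> R"
      unfolding PiR_def by blast
    then show False
      by cases (use that i string_step[OF assms i] in \<open>auto dest!: str_letter_eqD\<close>)
  qed
qed

section \<open>Substrings and reversed strings\<close>

lemma substring_is_string:
  assumes qw: "quiver_wf V E s t" and st: "is_string V E s t R x L" and ip: "i + d \<le> length L"
  shows "is_string V E s t R (smod_vert s t x L i) (take d (drop i L))"
    and "k \<le> d \<Longrightarrow> smod_vert s t (smod_vert s t x L i) (take d (drop i L)) k = smod_vert s t x L (i + k)"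
proof -
  let ?L = "take d (drop i L)"
  have len: "length ?L = d" and nth: "\<And>m. m < d \<Longrightarrow> ?L ! m = L ! (i + m)"
    using ip by simp_all
  have inE: "\<forall>l\<in>set L. larr l \<in> E"
    using st unfolding is_string_def by blast
  show "is_string V E s t R (smod_vert s t x L i) ?L"
    unfolding is_string_def
  proof (intro conjI allI impI ballI)
    show "smod_vert s t x L i \<in> V" using string_vert_in_V[OF qw st] ip by simp
    show "larr l \<in> E" if "l \<in> set ?L" for l
      using inE that by (meson in_set_dropD in_set_takeD)
    show "lsrc s t (?L ! 0) = smod_vert s t x L i" if "?L \<noteq> []"
      using that string_vert_lsrc[OF st, of i] nth[of 0] len ip by fastforce
    fix j
    assume "Suc j < length ?L"
    then have j: "Suc j < d" "Suc (i + j) < length L" using ip len by simp_all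
    show "ltgt s t (?L ! j) = lsrc s t (?L ! Suc j)"
      and "?L ! Suc j \<noteq> linv (?L ! j)"
      and "\<And>a b. ?L ! j = Dir a \<and> ?L ! Suc j = Dir b \<Longrightarrow> (b, a) \<notin> R"
      and "\<And>a b. ?L ! j = Inv a \<and> ?L ! Suc j = Inv b \<Longrightarrow> (a, b) \<notin> R"
      using string_step[OF st j(2)] nth[of j] nth[OF j(1)] j(1) by simp_all
  qed
  show "smod_vert s t (smod_vert s t x L i) ?L k = smod_vert s t x L (i + k)" if "k \<le> d"
    using that nth by (cases k) (simp_all add: smod_vert_def)
qed

lemma reversed_string_is_string:
  assumes qw: "quiver_wf V E s t" and st: "is_string V E s t R x L"
  shows "is_string V E s t R (smod_vert s t x L (length L)) (rev (map linv L))"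
    and "k \<le> length L \<Longrightarrow>
      smod_vert s t (smod_vert s t x L (length L)) (rev (map linv L)) k = smod_vert s t x L (length L - k)"
proof -
  let ?L = "rev (map linv L)" and ?p = "length L"
  have nth: "\<And>m. m < ?p \<Longrightarrow> ?L ! m = linv (L ! (?p - Suc m))"
    by (simp add: rev_nth)
  have inE: "\<forall>l\<in>set L. larr l \<in> E"
    using st unfolding is_string_def by blast
  show "is_string V E s t R (smod_vert s t x L ?p) ?L"
    unfolding is_string_def
  proof (intro conjI allI impI ballI)
    show "smod_vert s t x L ?p \<in> V" using string_vert_in_V[OF qw st] by simp
    show "larr l \<in> E" if "l \<in> set ?L" for l
      using inE that by auto
    show "lsrc s t (?L ! 0) = smod_vert s t x L ?p" if "?L \<noteq> []"
      using that nth[of 0] smod_vert_Suc[of s t x L "?p - 1"] by simp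
    fix j
    assume "Suc j < length ?L"
    then have j: "Suc (?p - Suc (Suc j)) < ?p" "Suc (?p - Suc (Suc j)) = ?p - Suc j" "Suc j < ?p"
      by auto
    note c = string_step[OF st j(1), unfolded j(2)]
    show "ltgt s t (?L ! j) = lsrc s t (?L ! Suc j)"
      using c nth[OF j(3)] nth[of j] j(3) by simp
    show "?L ! Suc j \<noteq> linv (?L ! j)"
      using c nth[OF j(3)] nth[of j] j(3) by (metis Suc_lessD linv_linv)
    show "(b, a) \<notin> R" if "?L ! j = Dir a \<and> ?L ! Suc j = Dir b" for a b
    proof -
      from that have "L ! (?p - Suc j) = Inv a" "L ! (?p - Suc (Suc j)) = Inv b"
        using nth[OF j(3)] nth[of j] j(3) by (metis Suc_lessD linv.simps(1) linv_linv)+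
      then show ?thesis using c by simp
    qed
    show "(a, b) \<notin> R" if "?L ! j = Inv a \<and> ?L ! Suc j = Inv b" for a b
    proof -
      from that have "L ! (?p - Suc j) = Dir a" "L ! (?p - Suc (Suc j)) = Dir b"
        using nth[OF j(3)] nth[of j] j(3) by (metis Suc_lessD linv.simps(2) linv_linv)+
      then show ?thesis using c by simp
    qed
  qed
  show "smod_vert s t (smod_vert s t x L ?p) ?L k = smod_vert s t x L (?p - k)" if "k \<le> ?p"
  proof (cases k)
    case (Suc n)
    with that show ?thesis
      using nth[of n] string_vert_lsrc[OF st, of "?p - Suc n"] by (simp add: smod_vert_def)
  qed (simp add: smod_vert_def)
qed

section \<open>Simple cycles\<close>

definition simple_cycle :: "('a \<Rightarrow> 'v) \<Rightarrow> ('a \<Rightarrow> 'v) \<Rightarrow> 'v \<Rightarrow> 'a letter list \<Rightarrow> bool" where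
  "simple_cycle s t x L \<longleftrightarrow> 0 < length L \<and> smod_vert s t x L 0 = smod_vert s t x L (length L) \<and>
     (\<forall>k l. k < l \<and> l \<le> length L \<and> (k, l) \<noteq> (0, length L) \<longrightarrow>
        smod_vert s t x L k \<noteq> smod_vert s t x L l)"

lemma simple_cycle_vert_eq_iff:
  assumes "simple_cycle s t x L" and "k \<le> length L" "l \<le> length L"
  shows "smod_vert s t x L k = smod_vert s t x L l \<longleftrightarrow> k = l \<or> {k, l} = {0, length L}"
proof -
  have ne: "smod_vert s t x L k' \<noteq> smod_vert s t x L l'"
    if "k' < l'" "l' \<le> length L" "(k', l') \<noteq> (0, length L)" for k' l'
    using assms(1) that unfolding simple_cycle_def by blast
  have closed: "smod_vert s t x L 0 = smod_vert s t x L (length L)"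
    using assms(1) unfolding simple_cycle_def by blast
  show ?thesis
  proof (cases k l rule: linorder_cases)
    case less
    show ?thesis
    proof (cases "(k, l) = (0, length L)")
      case True
      then show ?thesis using closed by simp
    next
      case False
      then show ?thesis using ne[OF less assms(3) False] less by (auto simp: doubleton_eq_iff)
    qed
  next
    case greater
    show ?thesis
    proof (cases "(l, k) = (0, length L)")
      case True
      then show ?thesis using closed by auto
    next
      case False
      then show ?thesis using ne[OF greater assms(2) False] greater by (auto simp: doubleton_eq_iff)
    qed
  qed simp
qed

lemma reversed_simple_cycle:
  assumes qw: "quiver_wf V E s t" and st: "is_string V E s t R x L" and cyc: "simple_cycle s t x L"
  shows "simple_cycle s t (smod_vert s t x L (length L)) (rev (map linv L))"
proof -
  let ?p = "length L" and ?v = "smod_vert s t x L"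
  have rv: "k \<le> ?p \<Longrightarrow> smod_vert s t (?v ?p) (rev (map linv L)) k = ?v (?p - k)" for k
    by (rule reversed_string_is_string(2)[OF qw st])
  have ne: "?v k \<noteq> ?v l" if "k < l" "l \<le> ?p" "(k, l) \<noteq> (0, ?p)" for k l
    using cyc that unfolding simple_cycle_def by blast
  show ?thesis
    unfolding simple_cycle_def
  proof (intro conjI allI impI)
    show "0 < length (rev (map linv L))" using cyc by (simp add: simple_cycle_def)
    show "smod_vert s t (?v ?p) (rev (map linv L)) 0 =
        smod_vert s t (?v ?p) (rev (map linv L)) (length (rev (map linv L)))"
      using rv[of 0] rv[of ?p] cyc by (simp add: simple_cycle_def)
    fix k l
    assume "k < l \<and> l \<le> length (rev (map linv L)) \<and> (k, l) \<noteq> (0, length (rev (map linv L)))"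
    then have "?p - l < ?p - k" "?p - k \<le> ?p" "(?p - l, ?p - k) \<noteq> (0, ?p)" "k \<le> ?p" "l \<le> ?p"
      by auto
    then show "smod_vert s t (?v ?p) (rev (map linv L)) k \<noteq> smod_vert s t (?v ?p) (rev (map linv L)) l"
      using ne rv by metis
  qed
qed

text \<open>A shortest closed subwalk of a string is a simple cycle.\<close>

lemma string_repeated_vert_simple_cycle:
  assumes qw: "quiver_wf V E s t" and st: "is_string V E s t R x L"
    and "i < j" "j \<le> length L" "smod_vert s t x L i = smod_vert s t x L j"
  shows "\<exists>i' d. i' + d \<le> length L \<and> simple_cycle s t (smod_vert s t x L i') (take d (drop i' L))"
proof -
  let ?v = "smod_vert s t x L"
  define P where "P d \<longleftrightarrow> (\<exists>i. 0 < d \<and> i + d \<le> length L \<and> ?v i = ?v (i + d))" for d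
  have "P (j - i)" unfolding P_def using assms(3-5) by (intro exI[of _ i]) auto
  then have "P (LEAST d. P d)" by (rule LeastI)
  then obtain i0 d where d: "d = (LEAST d. P d)" and i0: "0 < d" "i0 + d \<le> length L" "?v i0 = ?v (i0 + d)"
    unfolding P_def by blast
  let ?L = "take d (drop i0 L)" and ?x = "?v i0"
  have len: "length ?L = d" using i0(2) by simp
  have vv: "k \<le> d \<Longrightarrow> smod_vert s t ?x ?L k = ?v (i0 + k)" for k
    by (rule substring_is_string(2)[OF qw st i0(2)])
  have "simple_cycle s t ?x ?L"
    unfolding simple_cycle_def
  proof (intro conjI allI impI)
    show "0 < length ?L" using len i0(1) by simp
    show "smod_vert s t ?x ?L 0 = smod_vert s t ?x ?L (length ?L)"
      using vv[of 0] vv[of d] i0(3) len by simp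
    fix k l
    assume kl: "k < l \<and> l \<le> length ?L \<and> (k, l) \<noteq> (0, length ?L)"
    show "smod_vert s t ?x ?L k \<noteq> smod_vert s t ?x ?L l"
    proof
      assume "smod_vert s t ?x ?L k = smod_vert s t ?x ?L l"
      then have "P (l - k)"
        unfolding P_def using vv kl len i0(2) by (intro exI[of _ "i0 + k"]) auto
      then have "d \<le> l - k" unfolding d by (rule Least_le)
      with kl len show False by auto
    qed
  qed
  with i0(2) show ?thesis by blast
qed

lemma tgt_idx_ne_0: "is_dir (L ! 0) \<Longrightarrow> tgt_idx L m \<noteq> 0"
  by (cases m) (auto simp: tgt_idx_def)

lemma src_idx_ne_length:
  assumes "is_dir (L ! (length L - 1))" and "m < length L"
  shows "src_idx L m \<noteq> length L"
proof
  assume "src_idx L m = length L"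
  with assms(2) have "m = length L - 1" "\<not> is_dir (L ! m)"
    by (auto simp: src_idx_def split: if_splits)
  with assms(1) show False by simp
qed

definition first_to_last :: "nat \<Rightarrow> nat \<Rightarrow> nat \<Rightarrow> 'k::field" where
  "first_to_last n j i = (if j = n \<and> i = 0 then 1 else 0)"

lemma first_to_last_nonzero: "(first_to_last n :: nat \<Rightarrow> nat \<Rightarrow> 'k::field) \<noteq> (\<lambda>j i. 0)"
  by (auto simp: first_to_last_def fun_eq_iff)

lemma first_to_last_square:
  "0 < n \<Longrightarrow> mmul (Suc n) (first_to_last n) (first_to_last n) = (\<lambda>j i. 0 :: 'k::field)"
  unfolding mmul_def by (intro ext sum.neutral ballI) (simp add: first_to_last_def)

text \<open>If a simple cycle starts and ends with direct letters, no arrow maps into the first basis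
  vector of its string module and all arrows kill the last one, which lies at the same vertex;
  so first_to_last is an endomorphism.\<close>

locale dir_ends_simple_cycle =
  fixes V :: "'v set" and E :: "'a set" and s t :: "'a \<Rightarrow> 'v" and R :: "('a \<times> 'a) set"
    and x :: 'v and L :: "'a letter list"
  assumes qw: "quiver_wf V E s t" and st: "is_string V E s t R x L" and cyc: "simple_cycle s t x L"
    and dir_first: "is_dir (L ! 0)" and dir_last: "is_dir (L ! (length L - 1))"
begin

abbreviation "p \<equiv> length L"
abbreviation "v \<equiv> smod_vert s t x L"

lemma p_pos: "0 < p"
  using cyc by (simp add: simple_cycle_def)

lemma smod_act_first_row: "smod_act L a 0 i = 0"
  and smod_act_last_col: "smod_act L a j p = 0"
  using tgt_idx_ne_0[OF dir_first] src_idx_ne_length[OF dir_last]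
  unfolding smod_act_eq by (metis (full_types))+

lemma first_to_last_endo: "is_endo (Suc p) v (smod_act L) (first_to_last p :: nat \<Rightarrow> nat \<Rightarrow> 'k::field)"
  unfolding is_endo_def
proof (intro conjI allI impI)
  show "i < Suc p" "j < Suc p" "v i = v j" if "(first_to_last p j i :: 'k) \<noteq> 0" for j i
    using that cyc by (auto simp: first_to_last_def simple_cycle_def split: if_splits)
  have "mmul (Suc p) (smod_act L a) (first_to_last p) = (\<lambda>j i. 0 :: 'k)"
    "mmul (Suc p) (first_to_last p) (smod_act L a) = (\<lambda>j i. 0 :: 'k)" for a
    unfolding mmul_def
    by (intro ext sum.neutral ballI; simp add: first_to_last_def smod_act_first_row smod_act_last_col)+
  then show "mmul (Suc p) (smod_act L a) (first_to_last p) =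
      mmul (Suc p) (first_to_last p :: nat \<Rightarrow> nat \<Rightarrow> 'k) (smod_act L a)" for a
    by simp
qed

context
  fixes e :: "nat \<Rightarrow> nat \<Rightarrow> 'k::field"
  assumes endo: "is_endo (Suc p) v (smod_act L) e"
begin

lemma string_endo_supp: "e j i \<noteq> 0 \<Longrightarrow> j = i \<and> i \<le> p \<or> j = p \<and> i = 0 \<or> j = 0 \<and> i = p"
  using endo simple_cycle_vert_eq_iff[OF cyc, of j i]
  unfolding is_endo_def by (auto simp: doubleton_eq_iff less_Suc_eq_le)

lemma string_endo_first_last: "e 0 p = 0"
proof -
  let ?a = "larr (L ! 0)"
  have row: "smod_act L ?a (Suc 0) i = (if i = 0 then 1 else (0 :: 'k))" for i
    using smod_act_tgt_row[OF string_no_backtrack[OF st] p_pos, of i] dir_first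
    by (simp add: src_idx_def tgt_idx_def)
  have "mmul (Suc p) (smod_act L ?a) e (Suc 0) p = e 0 p"
    by (subst mmul_eq_single[of 0]) (simp_all add: row)
  moreover have "mmul (Suc p) e (smod_act L ?a) (Suc 0) p = 0"
    unfolding mmul_def by (simp add: smod_act_last_col)
  ultimately show ?thesis
    using endo unfolding is_endo_def by metis
qed

lemma string_endo_eq: "e = (\<lambda>j i. e 0 0 * idm (Suc p) j i + e p 0 * first_to_last p j i)"
proof (intro ext)
  fix j i
  show "e j i = e 0 0 * idm (Suc p) j i + e p 0 * first_to_last p j i"
    using string_endo_supp[of j i] string_endo_first_last p_pos
      string_endo_diag_const[OF string_no_backtrack[OF st] endo, of i]
    by (cases "e j i = 0") (auto simp: idm_def first_to_last_def)
qed

end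

lemma string_module_nonbrick:
  "is_rep V E s t R (Suc p) v (smod_act L :: 'a \<Rightarrow> nat \<Rightarrow> nat \<Rightarrow> 'k::field)
    \<and> indecomposable (Suc p) v (smod_act L :: 'a \<Rightarrow> nat \<Rightarrow> nat \<Rightarrow> 'k)
    \<and> \<not> end_division (Suc p) v (smod_act L :: 'a \<Rightarrow> nat \<Rightarrow> nat \<Rightarrow> 'k)"
proof -
  have End: "\<exists>a b. e = (\<lambda>j i. a * idm (Suc p) j i + b * first_to_last p j i)"
    if "is_endo (Suc p) v (smod_act L) (e :: nat \<Rightarrow> nat \<Rightarrow> 'k)" for e
    using string_endo_eq[OF that] by blast
  from indecomposable_not_division_if_End_dual_numbers[OF _ first_to_last_endo first_to_last_nonzero
      first_to_last_square[OF p_pos] End] string_module_is_rep[OF qw st]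
  show ?thesis by simp
qed

end

section \<open>Band modules\<close>

lemma mod_less_double: "(i::nat) < 2 * p \<Longrightarrow> i mod p = (if i < p then i else i - p)"
  by (simp add: le_mod_geq)

definition band_src :: "'a letter list \<Rightarrow> nat \<Rightarrow> nat" where
  "band_src L m = src_idx L m mod length L"

definition band_tgt :: "'a letter list \<Rightarrow> nat \<Rightarrow> nat" where
  "band_tgt L m = tgt_idx L m mod length L"

text \<open>The band module of a closed walk L for the 2 \<times> 2 Jordan block with eigenvalue 1: the basis
  vectors i and i + length L both lie at the i-th vertex of the walk, every letter acts on both
  copies, and the last letter additionally maps the upper copy to the lower one.\<close>

definition band_entry :: "'a letter list \<Rightarrow> nat \<Rightarrow> nat \<Rightarrow> nat \<Rightarrow> bool" where
  "band_entry L m j i \<longleftrightarrow> (i = band_src L m \<and> j = band_tgt L m) \<or>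
     (i = band_src L m + length L \<and> j = band_tgt L m + length L) \<or>
     (Suc m = length L \<and> i = band_src L m + length L \<and> j = band_tgt L m)"

definition band_act :: "'a letter list \<Rightarrow> 'a \<Rightarrow> nat \<Rightarrow> nat \<Rightarrow> 'k::field" where
  "band_act L a j i = (if \<exists>m<length L. larr (L ! m) = a \<and> band_entry L m j i then 1 else 0)"

definition band_vert :: "('a \<Rightarrow> 'v) \<Rightarrow> ('a \<Rightarrow> 'v) \<Rightarrow> 'v \<Rightarrow> 'a letter list \<Rightarrow> nat \<Rightarrow> 'v" where
  "band_vert s t x L i = smod_vert s t x L (i mod length L)"

definition band_shift :: "nat \<Rightarrow> nat \<Rightarrow> nat \<Rightarrow> 'k::field" where
  "band_shift n j i = (if n \<le> i \<and> i < 2 * n \<and> j = i - n then 1 else 0)"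

lemma mmul_band_shift_right:
  fixes A :: "nat \<Rightarrow> nat \<Rightarrow> 'k::field"
  shows "mmul (2 * n) A (band_shift n) j i = (if n \<le> i \<and> i < 2 * n then A j (i - n) else 0)"
proof (cases "n \<le> i \<and> i < 2 * n")
  case True
  then show ?thesis by (subst mmul_eq_single[of "i - n"]) (auto simp: band_shift_def)
next
  case False
  then have "(band_shift n k i :: 'k) = 0" for k by (auto simp: band_shift_def)
  with False show ?thesis by (auto simp: mmul_def)
qed

lemma mmul_band_shift_left:
  fixes A :: "nat \<Rightarrow> nat \<Rightarrow> 'k::field"
  shows "mmul (2 * n) (band_shift n) A j i = (if j < n then A (j + n) i else 0)"
proof (cases "j < n")
  case True
  then show ?thesis by (subst mmul_eq_single[of "j + n"]) (auto simp: band_shift_def)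
next
  case False
  then have "(band_shift n j k :: 'k) = 0" if "k < 2 * n" for k using that by (auto simp: band_shift_def)
  with False show ?thesis by (simp add: mmul_def)
qed

text \<open>If the first and the last letter of a simple cycle point in opposite directions, winding
  around it creates no relation at the base point: the cycle is a band.\<close>

locale mixed_simple_cycle =
  fixes V :: "'v set" and E :: "'a set" and s t :: "'a \<Rightarrow> 'v" and R :: "('a \<times> 'a) set"
    and x :: 'v and L :: "'a letter list"
  assumes qw: "quiver_wf V E s t" and st: "is_string V E s t R x L" and cyc: "simple_cycle s t x L"
    and mixed: "is_dir (L ! 0) \<noteq> is_dir (L ! (length L - 1))"
begin

abbreviation "p \<equiv> length L"
abbreviation "v \<equiv> smod_vert s t x L"

lemma two_le_p: "2 \<le> p"
proof -
  have "0 < p" using cyc by (simp add: simple_cycle_def)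
  moreover have "p \<noteq> 1" using mixed by auto
  ultimately show ?thesis by linarith
qed

lemma p_pos: "0 < p"
  using two_le_p by linarith

lemma vert_inj: "k < p \<Longrightarrow> l < p \<Longrightarrow> v k = v l \<Longrightarrow> k = l"
  using simple_cycle_vert_eq_iff[OF cyc, of k l] by (auto simp: doubleton_eq_iff)

lemma vert_mod: "k \<le> p \<Longrightarrow> v (k mod p) = v k"
  using cyc by (cases "k = p") (simp_all add: simple_cycle_def)

lemma band_src_tgt:
  assumes "m < p"
  shows "band_src L m < p" "band_tgt L m < p" "band_src L m \<noteq> band_tgt L m"
    and "v (band_src L m) = s (larr (L ! m))" "v (band_tgt L m) = t (larr (L ! m))"
proof -
  show "band_src L m < p" "band_tgt L m < p"
    using p_pos by (simp_all add: band_src_def band_tgt_def)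
  show "band_src L m \<noteq> band_tgt L m"
    using assms two_le_p by (auto simp: band_src_def band_tgt_def src_idx_def tgt_idx_def mod_Suc)
  show "v (band_src L m) = s (larr (L ! m))" "v (band_tgt L m) = t (larr (L ! m))"
    using string_vert_idx[OF st assms] vert_mod idx_le_length[OF assms]
    by (simp_all add: band_src_def band_tgt_def)
qed

text \<open>Two letters of a simple cycle can only share their arrow in a backtrack [Dir a, Inv a] or
  [Inv a, Dir a].\<close>

lemma letter_arrow_inj:
  assumes m: "m < p" and m': "m' < p" and eq: "larr (L ! m) = larr (L ! m')"
  shows "m = m'"
proof -
  have src: "band_src L m = band_src L m'" and tgt: "band_tgt L m = band_tgt L m'"
    using vert_inj band_src_tgt[OF m] band_src_tgt[OF m'] eq by metis+
  show ?thesis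
  proof (rule ccontr)
    assume "m \<noteq> m'"
    with src tgt m m' two_le_p have "{m, m'} = {0, 1}" "p = 2" "is_dir (L ! m) \<noteq> is_dir (L ! m')"
      by (auto simp: band_src_def band_tgt_def src_idx_def tgt_idx_def mod_Suc split: if_splits)
    then have "L ! 1 = linv (L ! 0)"
      using eq by (metis Dir_larr Inv_larr doubleton_eq_iff is_dir_linv larr_linv)
    with string_no_backtrack[OF st] \<open>p = 2\<close> show False
      unfolding no_backtrack_def by auto
  qed
qed

lemma band_act_letter:
  "m < p \<Longrightarrow> band_act L (larr (L ! m)) = (\<lambda>j i. if band_entry L m j i then 1 else 0)"
  using letter_arrow_inj by (auto simp: band_act_def fun_eq_iff)

lemma band_act_other: "\<forall>m<p. larr (L ! m) \<noteq> a \<Longrightarrow> band_act L a = (\<lambda>j i. 0)"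
  by (auto simp: band_act_def fun_eq_iff)

lemma band_entry_mod:
  assumes "m < p" and "band_entry L m j i"
  shows "i < 2 * p" "j < 2 * p" "i mod p = band_src L m" "j mod p = band_tgt L m"
  using assms band_src_tgt[OF assms(1)] by (auto simp: band_entry_def)

lemma band_relation_free:
  assumes m: "m < p" and m': "m' < p" and eq: "band_tgt L m = band_src L m'"
  shows "(larr (L ! m'), larr (L ! m)) \<notin> R"
proof (cases "tgt_idx L m = src_idx L m'")
  case True
  then show ?thesis by (rule string_idx_relation_free[OF st m m'])
next
  case False
  with eq idx_le_length[OF m] idx_le_length[OF m'] p_pos
  have "tgt_idx L m = p \<and> src_idx L m' = 0 \<or> tgt_idx L m = 0 \<and> src_idx L m' = p"
    unfolding band_src_def band_tgt_def
    by (metis le_neq_implies_less mod_less mod_self)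
  then have "m = p - 1 \<and> m' = 0 \<and> is_dir (L ! m) \<and> is_dir (L ! m') \<or>
      m = 0 \<and> m' = p - 1 \<and> \<not> is_dir (L ! m) \<and> \<not> is_dir (L ! m')"
    using m m' by (auto simp: src_idx_def tgt_idx_def split: if_splits)
  with mixed show ?thesis by auto
qed

lemma band_module_is_rep:
  "is_rep V E s t R (2 * p) (band_vert s t x L) (band_act L :: 'a \<Rightarrow> nat \<Rightarrow> nat \<Rightarrow> 'k::field)"
  unfolding is_rep_def
proof (intro conjI allI impI)
  show "band_vert s t x L i \<in> V" for i
    using string_vert_in_V[OF qw st] p_pos by (simp add: band_vert_def less_imp_le)
next
  fix a j i
  assume "(band_act L a j i :: 'k) \<noteq> 0"
  then obtain m where m: "m < p" "larr (L ! m) = a" "band_entry L m j i"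
    by (auto simp: band_act_def split: if_splits)
  show "a \<in> E" using st m unfolding is_string_def by auto
  show "i < 2 * p" "j < 2 * p" "band_vert s t x L i = s a" "band_vert s t x L j = t a"
    using band_entry_mod[OF m(1,3)] band_src_tgt[OF m(1)] m(2) by (simp_all add: band_vert_def)
next
  fix b a
  assume ba: "(b, a) \<in> R"
  have "(band_act L b j l :: 'k) * band_act L a l i = 0" for j l i
  proof (rule ccontr)
    assume "(band_act L b j l :: 'k) * band_act L a l i \<noteq> 0"
    then obtain m m' where m: "m < p" "larr (L ! m) = a" "band_entry L m l i"
      and m': "m' < p" "larr (L ! m') = b" "band_entry L m' j l"
      by (auto simp: band_act_def split: if_splits)
    have "band_tgt L m = band_src L m'"
      using band_entry_mod(4)[OF m(1,3)] band_entry_mod(3)[OF m'(1,3)] by simp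
    with band_relation_free[OF m(1) m'(1)] ba m(2) m'(2) show False by simp
  qed
  then show "mmul (2 * p) (band_act L b) (band_act L a) = (\<lambda>j i. 0 :: 'k)"
    unfolding mmul_def by (intro ext sum.neutral ballI) simp
qed

lemma band_entry_shift:
  assumes "m < p"
  shows "(p \<le> i \<and> i < 2 * p \<and> band_entry L m j (i - p)) \<longleftrightarrow> (j < p \<and> band_entry L m (j + p) i)"
  using band_src_tgt[OF assms] unfolding band_entry_def by auto

lemma band_shift_endo:
  "is_endo (2 * p) (band_vert s t x L) (band_act L) (band_shift p :: nat \<Rightarrow> nat \<Rightarrow> 'k::field)"
  unfolding is_endo_def
proof (intro conjI allI)
  show "(band_shift p j i :: 'k) \<noteq> 0 \<longrightarrow> i < 2 * p \<and> j < 2 * p \<and> band_vert s t x L i = band_vert s t x L j"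
    for j i
    by (auto simp: band_shift_def band_vert_def mod_less_double)
  fix a
  show "mmul (2 * p) (band_act L a) (band_shift p) = mmul (2 * p) (band_shift p :: nat \<Rightarrow> nat \<Rightarrow> 'k) (band_act L a)"
  proof (cases "\<exists>m<p. larr (L ! m) = a")
    case True
    then obtain m where m: "m < p" "a = larr (L ! m)" by blast
    have comm: "mmul (2 * p) (band_act L a) (band_shift p) j i = mmul (2 * p) (band_shift p) (band_act L a) j i"
      for j i
      unfolding m(2) band_act_letter[OF m(1)] mmul_band_shift_right mmul_band_shift_left
      using band_entry_shift[OF m(1), of i j] by auto
    show ?thesis by (intro ext comm)
  next
    case False
    then show ?thesis by (simp add: band_act_other mmul_def)
  qed
qed

lemma band_shift_nonzero: "(band_shift p :: nat \<Rightarrow> nat \<Rightarrow> 'k::field) \<noteq> (\<lambda>j i. 0)"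
proof
  assume "(band_shift p :: nat \<Rightarrow> nat \<Rightarrow> 'k) = (\<lambda>j i. 0)"
  then have "(band_shift p 0 p :: 'k) = 0" by simp
  with p_pos show False by (simp add: band_shift_def)
qed

lemma band_shift_square: "mmul (2 * n) (band_shift n) (band_shift n) = (\<lambda>j i. 0 :: 'k::field)"
  by (simp add: mmul_band_shift_left band_shift_def fun_eq_iff, arith)

context
  fixes e :: "nat \<Rightarrow> nat \<Rightarrow> 'k::field"
  assumes endo: "is_endo (2 * p) (band_vert s t x L) (band_act L) e"
begin

lemma band_endo_supp: "e j i \<noteq> 0 \<Longrightarrow> i < 2 * p \<and> j < 2 * p \<and> j mod p = i mod p"
proof -
  assume "e j i \<noteq> 0"
  then have "i < 2 * p" "j < 2 * p" "v (i mod p) = v (j mod p)"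
    using endo unfolding is_endo_def band_vert_def by blast+
  then show ?thesis using vert_inj p_pos by simp
qed

lemma mmul_band_endo:
  assumes "i < 2 * p"
  shows "mmul (2 * p) A e j i = A j (i mod p) * e (i mod p) i + A j (i mod p + p) * e (i mod p + p) i"
proof (rule mmul_eq_two)
  fix l
  assume "l < 2 * p" "l \<noteq> i mod p" "l \<noteq> i mod p + p"
  moreover have "l = l mod p \<or> l = l mod p + p"
    using \<open>l < 2 * p\<close> by (simp add: mod_less_double)
  ultimately have "e l i = 0" using band_endo_supp[of l i] by metis
  then show "A j l * e l i = 0" by simp
qed (use assms p_pos in \<open>auto simp: mod_less_double\<close>)

lemma mmul_endo_band:
  assumes "j < 2 * p"
  shows "mmul (2 * p) e A j i = e j (j mod p) * A (j mod p) i + e j (j mod p + p) * A (j mod p + p) i"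
proof (rule mmul_eq_two)
  fix l
  assume "l < 2 * p" "l \<noteq> j mod p" "l \<noteq> j mod p + p"
  moreover have "l = l mod p \<or> l = l mod p + p"
    using \<open>l < 2 * p\<close> by (simp add: mod_less_double)
  ultimately have "e j l = 0" using band_endo_supp[of j l] by metis
  then show "e j l * A l i = 0" by simp
qed (use assms p_pos in \<open>auto simp: mod_less_double\<close>)

lemma band_endo_letter_eqs:
  assumes m: "m < p"
  defines "sp \<equiv> band_src L m" and "tp \<equiv> band_tgt L m" and "lst \<equiv> Suc m = p"
  shows "e sp sp + (if lst then e (sp + p) sp else 0) = e tp tp"
    and "e sp (sp + p) + (if lst then e (sp + p) (sp + p) else 0) = (if lst then e tp tp else 0) + e tp (tp + p)"
    and "e (sp + p) sp = e (tp + p) tp"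
    and "e (sp + p) (sp + p) = (if lst then e (tp + p) tp else 0) + e (tp + p) (tp + p)"
proof -
  have spl: "sp < p" and tpl: "tp < p" and ne: "sp \<noteq> tp"
    using band_src_tgt[OF m] by (simp_all add: sp_def tp_def)
  have B: "band_act L (larr (L ! m)) j i = (if (i = sp \<and> j = tp) \<or> (i = sp + p \<and> j = tp + p) \<or>
      (lst \<and> i = sp + p \<and> j = tp) then 1 else (0 :: 'k))" for j i
    by (simp add: band_act_letter[OF m] band_entry_def sp_def tp_def lst_def)
  have comm: "mmul (2 * p) (band_act L (larr (L ! m))) e j i = mmul (2 * p) e (band_act L (larr (L ! m))) j i"
    for j i
    using endo unfolding is_endo_def by metis
  have mods: "sp mod p = sp" "(sp + p) mod p = sp" "tp mod p = tp" "(tp + p) mod p = tp"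
    using spl tpl by simp_all
  have "L \<noteq> []" using p_pos by auto
  from comm[of tp sp] show "e sp sp + (if lst then e (sp + p) sp else 0) = e tp tp"
    using spl tpl ne \<open>L \<noteq> []\<close> by (cases lst) (simp_all add: mmul_band_endo mmul_endo_band mods B)
  from comm[of tp "sp + p"]
  show "e sp (sp + p) + (if lst then e (sp + p) (sp + p) else 0) = (if lst then e tp tp else 0) + e tp (tp + p)"
    using spl tpl ne \<open>L \<noteq> []\<close> by (cases lst) (simp_all add: mmul_band_endo mmul_endo_band mods B)
  from comm[of "tp + p" sp] show "e (sp + p) sp = e (tp + p) tp"
    using spl tpl ne \<open>L \<noteq> []\<close> by (cases lst) (simp_all add: mmul_band_endo mmul_endo_band mods B)
  from comm[of "tp + p" "sp + p"]
  show "e (sp + p) (sp + p) = (if lst then e (tp + p) tp else 0) + e (tp + p) (tp + p)"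
    using spl tpl ne \<open>L \<noteq> []\<close> by (cases lst) (simp_all add: mmul_band_endo mmul_endo_band mods B)
qed

text \<open>Each letter but the last forces the diagonal 2 \<times> 2 blocks of an endomorphism at its two ends
  to agree; the last letter, which carries the Jordan block J, then forces the common block to
  commute with J.\<close>

definition block :: "nat \<Rightarrow> 'k \<times> 'k \<times> 'k \<times> 'k" where
  "block k = (e k k, e k (k + p), e (k + p) k, e (k + p) (k + p))"

lemma block_Suc: "Suc k < p \<Longrightarrow> block (Suc k) = block k"
  using band_endo_letter_eqs[of k]
  by (cases "is_dir (L ! k)") (auto simp: block_def band_src_def band_tgt_def src_idx_def tgt_idx_def)

lemma block_const: "k < p \<Longrightarrow> block k = block 0"
  by (induction k) (simp_all add: block_Suc)

lemma band_endo_last_letter: "e p 0 = 0 \<and> e p p = e 0 0"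
proof -
  define m where "m = p - 1"
  have m: "m < p" and last: "Suc m = p" "Suc m mod p = 0"
    using p_pos by (auto simp: m_def)
  show ?thesis
    using band_endo_letter_eqs[OF m] block_const[OF m] last
    by (cases "is_dir (L ! m)") (auto simp: block_def band_src_def band_tgt_def src_idx_def tgt_idx_def)
qed

lemma band_endo_eq: "e = (\<lambda>j i. e 0 0 * idm (2 * p) j i + e 0 p * band_shift p j i)"
proof (intro ext)
  fix j i
  show "e j i = e 0 0 * idm (2 * p) j i + e 0 p * band_shift p j i"
  proof (cases "i < 2 * p \<and> j < 2 * p \<and> j mod p = i mod p")
    case True
    define k where "k = i mod p"
    have k: "k < p" using p_pos by (simp add: k_def)
    have blk: "e k k = e 0 0" "e k (k + p) = e 0 p" "e (k + p) k = 0" "e (k + p) (k + p) = e 0 0"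
      using block_const[OF k] band_endo_last_letter by (simp_all add: block_def)
    from True have ij: "i < 2 * p" "j < 2 * p" "j mod p = k" by (simp_all add: k_def)
    have "i = i mod p \<or> i = i mod p + p" "j = j mod p \<or> j = j mod p + p"
      using ij(1,2) by (simp_all add: mod_less_double)
    then have "i = k \<or> i = k + p" "j = k \<or> j = k + p"
      using ij(3) unfolding k_def by simp_all
    with k p_pos show ?thesis
      by (elim disjE) (simp_all add: blk idm_def band_shift_def)
  next
    case False
    then have "e j i = 0" using band_endo_supp by blast
    moreover have "idm (2 * p) j i = (0 :: 'k)" "band_shift p j i = (0 :: 'k)"
      using False by (auto simp: idm_def band_shift_def le_mod_geq)
    ultimately show ?thesis by simp
  qed
qed

end

lemma band_module_nonbrick:
  "is_rep V E s t R (2 * p) (band_vert s t x L) (band_act L :: 'a \<Rightarrow> nat \<Rightarrow> nat \<Rightarrow> 'k::field)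
    \<and> indecomposable (2 * p) (band_vert s t x L) (band_act L :: 'a \<Rightarrow> nat \<Rightarrow> nat \<Rightarrow> 'k)
    \<and> \<not> end_division (2 * p) (band_vert s t x L) (band_act L :: 'a \<Rightarrow> nat \<Rightarrow> nat \<Rightarrow> 'k)"
proof -
  have End: "\<exists>a b. e = (\<lambda>j i. a * idm (2 * p) j i + b * band_shift p j i)"
    if "is_endo (2 * p) (band_vert s t x L) (band_act L) (e :: nat \<Rightarrow> nat \<Rightarrow> 'k)" for e
    using band_endo_eq[OF that] by blast
  have "0 < 2 * p" using p_pos by simp
  from indecomposable_not_division_if_End_dual_numbers[OF this band_shift_endo band_shift_nonzero
      band_shift_square End] band_module_is_rep
  show ?thesis by blast
qed

end

section \<open>Strings of brick gentle algebras\<close>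

lemma simple_cycle_nonbrick:
  assumes qw: "quiver_wf V E s t" and st: "is_string V E s t R x L" and cyc: "simple_cycle s t x L"
  shows "\<exists>N vert (act :: 'a \<Rightarrow> nat \<Rightarrow> nat \<Rightarrow> 'k::field).
    is_rep V E s t R N vert act \<and> indecomposable N vert act \<and> \<not> end_division N vert act"
proof (cases "is_dir (L ! 0) = is_dir (L ! (length L - 1))")
  case False
  then interpret mixed_simple_cycle V E s t R x L
    using qw st cyc by unfold_locales
  show ?thesis using band_module_nonbrick by blast
next
  case True
  show ?thesis
  proof (cases "is_dir (L ! 0)")
    case True
    with \<open>is_dir (L ! 0) = _\<close> interpret dir_ends_simple_cycle V E s t R x L
      using qw st cyc by unfold_locales simp_all
    show ?thesis using string_module_nonbrick by blast
  next
    case False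
    let ?L = "rev (map linv L)" and ?x = "smod_vert s t x L (length L)"
    have p: "0 < length L" using cyc by (simp add: simple_cycle_def)
    have "is_dir (?L ! 0)" "is_dir (?L ! (length ?L - 1))"
      using False \<open>is_dir (L ! 0) = _\<close> p by (simp_all add: rev_nth)
    then interpret dir_ends_simple_cycle V E s t R ?x ?L
      using qw reversed_string_is_string(1)[OF qw st] reversed_simple_cycle[OF qw st cyc]
      by unfold_locales
    show ?thesis using string_module_nonbrick by blast
  qed
qed

lemma brick_gentle_string_vert_inj:
  assumes bg: "brick_gentle TYPE('k::field) V E s t R" and st: "is_string V E s t R x L"
    and "i \<le> length L" "j \<le> length L" and eq: "smod_vert s t x L i = smod_vert s t x L j"
  shows "i = j"
proof (rule ccontr)
  assume "i \<noteq> j"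
  have qw: "quiver_wf V E s t" using bg by (simp add: brick_gentle_def gentle_def)
  obtain i' d where "i' + d \<le> length L" and cyc: "simple_cycle s t (smod_vert s t x L i') (take d (drop i' L))"
  proof (cases "i < j")
    case True
    with string_repeated_vert_simple_cycle[OF qw st True assms(4) eq] that show ?thesis by blast
  next
    case False
    with \<open>i \<noteq> j\<close> have "j < i" by simp
    with string_repeated_vert_simple_cycle[OF qw st this assms(3) eq[symmetric]] that show ?thesis by blast
  qed
  then obtain N vert and act :: "_ \<Rightarrow> nat \<Rightarrow> nat \<Rightarrow> 'k" where
    "is_rep V E s t R N vert act" "indecomposable N vert act" "\<not> end_division N vert act"
    using simple_cycle_nonbrick[OF qw substring_is_string(1)[OF qw st] cyc] by blast
  with bg show False unfolding brick_gentle_def by blast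
qed

theorem lemma6p5:
  fixes V :: "'v set" and E :: "'a set" and s t :: "'a \<Rightarrow> 'v"
    and R :: "('a \<times> 'a) set" and x :: 'v and L :: "'a letter list" and c :: "nat \<Rightarrow> bool"
  assumes "brick_gentle TYPE('k::field) V E s t R"
    and "is_string V E s t R x L"
  shows "is_rep V (PiE E) (pis s t) (pit s t) (PiR R)
           (Suc (length (str L c))) (smod_vert (pis s t) (pit s t) x (str L c))
           (smod_act (str L c) :: 'a parr \<Rightarrow> nat \<Rightarrow> nat \<Rightarrow> 'k)
       \<and> end_is_field (Suc (length (str L c))) (smod_vert (pis s t) (pit s t) x (str L c))
           (smod_act (str L c) :: 'a parr \<Rightarrow> nat \<Rightarrow> nat \<Rightarrow> 'k)"
proof
  have qw: "quiver_wf V E s t" using assms(1) by (simp add: brick_gentle_def gentle_def)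
  have str: "is_string V (PiE E) (pis s t) (pit s t) (PiR R) x (str L c)"
    using assms(2) by (rule str_is_string)
  show "is_rep V (PiE E) (pis s t) (pit s t) (PiR R)
           (Suc (length (str L c))) (smod_vert (pis s t) (pit s t) x (str L c))
           (smod_act (str L c) :: 'a parr \<Rightarrow> nat \<Rightarrow> nat \<Rightarrow> 'k)"
    by (rule string_module_is_rep[OF quiver_wf_PiE[OF qw] str])
  have "i = j" if "i \<le> length (str L c)" "j \<le> length (str L c)"
    and "smod_vert (pis s t) (pit s t) x (str L c) i = smod_vert (pis s t) (pit s t) x (str L c) j" for i j
    using that brick_gentle_string_vert_inj[OF assms, of i j] by (simp add: smod_vert_str)
  then show "end_is_field (Suc (length (str L c))) (smod_vert (pis s t) (pit s t) x (str L c))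
           (smod_act (str L c) :: 'a parr \<Rightarrow> nat \<Rightarrow> nat \<Rightarrow> 'k)"
    by (rule string_module_end_is_field[OF string_no_backtrack[OF str]])
qed

end
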